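(* Let $\mathcal{Q}=\{-1,0,1\}$ and, for $t\in\mathbb{R}$, let $[t]_{\mathcal{Q}}=\arg\min_{z\in\mathcal{Q}}|t-z|$ (nearest rounding), applied coordinatewise to vectors in $\mathbb{R}^d$. Fix $\boldsymbol{w}\in\mathbb{R}^d$ and a maximal step size $\eta>0$. Consider the greedy procedure: $\boldsymbol{r}_1=\boldsymbol{w}$, and for $i=1,2,\dots$ (until termination, i.e. until the residual becomes $\boldsymbol{0}$), $$a_i^*=\arg\min_{a\in G_i}\left\|\boldsymbol{r}_i-a\left[\tfrac{\boldsymbol{r}_i}{a}\right]_{\mathcal{Q}}\right\|,\qquad \tilde{\boldsymbol{w}}_i^*=\left[\tfrac{\boldsymbol{r}_i}{a_i^*}\right]_{\mathcal{Q}},\qquad \boldsymbol{r}_{i+1}=\boldsymbol{r}_i-a_i^*\tilde{\boldsymbol{w}}_i^*,$$ where the grid search range is $G_i=\{k\gamma_i : k\in\mathbb{Z}_{>0},\ k\gamma_i\le 2(2^{2-1}-1)\|\boldsymbol{r}_i\|\}$ with step size $\gamma_i>0$. Assume that $\gamma_i\le\min(\Delta_{\boldsymbol{r}_i},\eta)$ for every step $i$ before termination. Let $\ell(\boldsymbol{r},a,\boldsymbol{v})=\|\boldsymbol{r}-a\boldsymbol{v}\|$. Then there is a constant $c>0$ such that $$\ell(\boldsymbol{r}_i,a_i^*,\tilde{\boldsymbol{w}}_i^* )=\mathcal{O}\left(\exp(-ci)+\eta\right).$$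
   Context: $\|\cdot\|$ denotes the Euclidean norm. For $\boldsymbol{t}=(t_1,\dots,t_d)\in\mathbb{R}^d$, the minimal gap of $\boldsymbol{t}$ is $\Delta_{\boldsymbol{t}}=\min\left\{\frac{\left|\,|t_i|-|t_j|\,\right|}{2} : i,j\in\{1,\dots,d\},\ t_i\neq t_j\right\}$. This is the case of bit-width $b=2$ of the $b$-bit quantization set, i.e. the grid $[-1:\epsilon_b:1]$ with $\epsilon_b=1/(2^{b-1}-1)$. *)

theory Defs
  imports "HOL-Analysis.Analysis"
begin

definition Qset :: "real set" where
  "Qset = {-1, 0, 1}"

definition Qround :: "real \<Rightarrow> real" where
  "Qround t = (ARG_MIN (\<lambda>z. \<bar>t - z\<bar>) z. z \<in> Qset)"

definition Qvec :: "real ^ 'n \<Rightarrow> real ^ 'n" where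
  "Qvec v = (\<chi> j. Qround (v $ j))"

text \<open>Minimal gap; min over the empty set is +infinity.\<close>
definition min_gap :: "real ^ 'n \<Rightarrow> ereal" where
  "min_gap t =
     (let S = {\<bar>\<bar>t $ i\<bar> - \<bar>t $ j\<bar>\<bar> / 2 | i j. t $ i \<noteq> t $ j}
      in if S = {} then \<infinity> else ereal (Min S))"

definition qloss :: "real ^ 'n \<Rightarrow> real \<Rightarrow> real ^ 'n \<Rightarrow> real" where
  "qloss r a v = norm (r - a *\<^sub>R v)"

text \<open>Grid search range with step size gamma (b = 2).\<close>
definition grid :: "real ^ 'n \<Rightarrow> real \<Rightarrow> real set" where
  "grid r \<gamma> = {real k * \<gamma> | k :: nat.
                 0 < k \<and> real k * \<gamma> \<le> 2 * (2 ^ (2 - 1) - 1) * norm r}"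

definition grid_obj :: "real ^ 'n \<Rightarrow> real \<Rightarrow> real" where
  "grid_obj r a = qloss r a (Qvec ((1 / a) *\<^sub>R r))"

text \<open>Step i has not terminated: all residuals r_1..r_i are nonzero.\<close>
definition active :: "(nat \<Rightarrow> real ^ 'n) \<Rightarrow> nat \<Rightarrow> bool" where
  "active r i = (\<forall>j \<in> {1..i}. r j \<noteq> 0)"

end

theory Submission
  imports Defs
begin

(* Let M be the largest absolute coordinate of the residual r and d the dimension.  If the grid
   step gamma is at most M, the grid contains a scale a with M <= a < M + gamma.  Rounding r/a to
   {-1,0,1} leaves no coordinate error larger than |r_j| and brings the largest coordinate within
   a - M < gamma of its target, so ||r - a [r/a]||^2 <= ||r||^2 - M^2 + gamma^2
   <= (1 - 1/d) ||r||^2 + gamma^2; if gamma > M, then already ||r|| <= sqrt d * gamma.  As the grid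
   search picks the best scale and gamma <= eta, every step satisfies
   ||r_(i+1)|| <= rho ||r_i|| + sqrt d * eta with rho = exp (-1/(2d)) >= sqrt (1 - 1/d), and
   unrolling this recurrence gives the claim with c = 1/(2d). *)

lemma power2_norm_cart: "(norm (x :: real ^ 'n))\<^sup>2 = (\<Sum>i\<in>UNIV. (x $ i)\<^sup>2)"
  by (simp add: norm_vec_def L2_set_def sum_nonneg)

lemma infnorm_attained_cart: obtains i where "\<bar>(x :: real ^ 'n) $ i\<bar> = infnorm x"
proof -
  have "{\<bar>x $ i\<bar> |i. i \<in> UNIV} = range (\<lambda>i. \<bar>x $ i\<bar>)" by auto
  then have "infnorm x \<in> range (\<lambda>i. \<bar>x $ i\<bar>)"
    unfolding infnorm_cart by (simp add: cSup_eq_Max)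
  with that show ?thesis by (metis imageE)
qed

lemma power2_norm_le_card_infnorm: "(norm (x :: real ^ 'n))\<^sup>2 \<le> CARD('n) * (infnorm x)\<^sup>2"
proof -
  have "norm x \<le> sqrt CARD('n) * infnorm x"
    using norm_le_infnorm[of x] by simp
  then have "(norm x)\<^sup>2 \<le> (sqrt CARD('n) * infnorm x)\<^sup>2"
    by (simp add: power_mono)
  then show ?thesis by (simp add: power_mult_distrib)
qed

lemma sqrt_one_minus_inverse_le_exp:
  fixes x :: real assumes "1 \<le> x"
  shows "sqrt (1 - 1 / x) \<le> exp (- 1 / (2 * x))"
proof (rule real_le_lsqrt)
  have "1 + (- 1 / x) \<le> exp (- 1 / x)" by (rule exp_ge_add_one_self)
  also have "exp (- 1 / x) = (exp (- 1 / (2 * x)))\<^sup>2"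
    by (simp add: power2_eq_square flip: exp_add)
  finally show "1 - 1 / x \<le> (exp (- 1 / (2 * x)))\<^sup>2" by simp
qed simp_all

lemma linear_recurrence_le:
  fixes x :: "nat \<Rightarrow> real"
  assumes "0 \<le> \<rho>" "\<rho> < 1" "0 \<le> b" "\<And>k. k < n \<Longrightarrow> x (Suc k) \<le> \<rho> * x k + b"
  shows "x n \<le> \<rho> ^ n * x 0 + b / (1 - \<rho>)"
  using assms(4)
proof (induction n)
  case 0
  then show ?case using assms(2,3) by simp
next
  case (Suc n)
  have "x (Suc n) \<le> \<rho> * x n + b" by (rule Suc.prems) simp
  also have "\<dots> \<le> \<rho> * (\<rho> ^ n * x 0 + b / (1 - \<rho>)) + b"
    using Suc assms(1) by (simp add: mult_left_mono)
  also have "\<dots> = \<rho> ^ Suc n * x 0 + b / (1 - \<rho>)"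
    using assms(2) by (simp add: field_simps)
  finally show ?case .
qed

lemma Qround_nearest:
  assumes "z \<in> Qset" shows "\<bar>t - Qround t\<bar> \<le> \<bar>t - z\<bar>"
proof -
  have "finite Qset" "Qset \<noteq> {}" by (auto simp: Qset_def)
  from arg_min_if_finite(2)[OF this, of "\<lambda>z. \<bar>t - z\<bar>"] assms
  show ?thesis unfolding Qround_def arg_min_on_def by force
qed

lemma abs_diff_scaled_Qround_le:
  assumes "0 < a" "z \<in> Qset"
  shows "\<bar>t - a * Qround (t / a)\<bar> \<le> \<bar>t - a * z\<bar>"
proof -
  have scale: "\<bar>t - a * q\<bar> = a * \<bar>t / a - q\<bar>" for q
  proof -
    have "t - a * q = a * (t / a - q)" using assms(1) by (simp add: field_simps)
    then show ?thesis using assms(1) by (simp add: abs_mult)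
  qed
  show ?thesis
    unfolding scale using Qround_nearest[OF assms(2)] assms(1) by simp
qed

lemma grid_obj_eq_norm:
  "grid_obj r a = norm (\<chi> j. r $ j - a * Qround (r $ j / a))"
  unfolding grid_obj_def qloss_def by (rule arg_cong[where f = norm]) (simp add: vec_eq_iff Qvec_def)

lemma grid_obj_le_norm:
  assumes "0 < a" shows "grid_obj r a \<le> norm r"
  unfolding grid_obj_eq_norm
  by (rule norm_le_componentwise_cart)
    (use abs_diff_scaled_Qround_le[OF assms, of 0] in \<open>simp add: Qset_def\<close>)

lemma power2_grid_obj_le:
  fixes r :: "real ^ 'n"
  assumes "infnorm r \<le> a" "0 < a"
  shows "(grid_obj r a)\<^sup>2 \<le> (norm r)\<^sup>2 - (infnorm r)\<^sup>2 + (a - infnorm r)\<^sup>2"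
proof -
  define e :: "real ^ 'n" where "e = (\<chi> j. r $ j - a * Qround (r $ j / a))"
  obtain j0 where j0: "\<bar>r $ j0\<bar> = infnorm r" by (rule infnorm_attained_cart)
  have "\<bar>e $ j\<bar> \<le> \<bar>r $ j\<bar>" for j
    using abs_diff_scaled_Qround_le[OF assms(2), of 0] by (simp add: e_def Qset_def)
  then have others: "(e $ j)\<^sup>2 \<le> (r $ j)\<^sup>2" for j
    by (simp add: abs_le_square_iff)
  have "\<bar>e $ j0\<bar> \<le> \<bar>r $ j0 - a * sgn (r $ j0)\<bar>"
    using abs_diff_scaled_Qround_le[OF assms(2), of "sgn (r $ j0)"] by (simp add: e_def Qset_def sgn_if)
  also have "\<dots> \<le> a - infnorm r"
    using j0 assms by (cases "0 < r $ j0"; cases "r $ j0 < 0") (simp_all add: sgn_if)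
  finally have "\<bar>e $ j0\<bar>\<^sup>2 \<le> (a - infnorm r)\<^sup>2"
    by (rule power_mono) simp
  then have top: "(e $ j0)\<^sup>2 \<le> (a - infnorm r)\<^sup>2"
    by simp
  have "(norm e)\<^sup>2 = (e $ j0)\<^sup>2 + (\<Sum>j\<in>UNIV - {j0}. (e $ j)\<^sup>2)"
    by (simp add: power2_norm_cart sum.remove[of UNIV j0])
  also have "\<dots> \<le> (a - infnorm r)\<^sup>2 + (\<Sum>j\<in>UNIV - {j0}. (r $ j)\<^sup>2)"
    using top others by (intro add_mono sum_mono)
  also have "(\<Sum>j\<in>UNIV - {j0}. (r $ j)\<^sup>2) = (norm r)\<^sup>2 - (infnorm r)\<^sup>2"
    using j0 power2_abs[of "r $ j0"] by (simp add: power2_norm_cart sum.remove[of UNIV j0])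
  finally show ?thesis by (simp add: grid_obj_eq_norm e_def)
qed

lemma grid_point_between:
  assumes "0 < \<gamma>" "\<gamma> \<le> m" "m \<le> norm r"
  obtains a where "a \<in> grid r \<gamma>" "m \<le> a" "a < m + \<gamma>"
proof
  define k where "k = nat \<lceil>m / \<gamma>\<rceil>"
  have "1 \<le> m / \<gamma>" using assms by simp
  then have k: "m / \<gamma> \<le> real k" "real k < m / \<gamma> + 1" "0 < k"
    unfolding k_def by linarith+
  show "m \<le> real k * \<gamma>" "real k * \<gamma> < m + \<gamma>"
    using k(1,2) assms(1) by (simp_all add: field_simps)
  then show "real k * \<gamma> \<in> grid r \<gamma>"
    using k(3) assms by (auto simp: grid_def)
qed

lemma grid_search_contracts:
  fixes r :: "real ^ 'n"
  assumes "0 < \<gamma>" and "is_arg_min (grid_obj r) (\<lambda>x. x \<in> grid r \<gamma>) a"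
  shows "grid_obj r a \<le> sqrt (1 - 1 / CARD('n)) * norm r + sqrt CARD('n) * \<gamma>"
proof -
  let ?d = "real CARD('n)"
  have "a \<in> grid r \<gamma>" and a_min: "\<And>a'. a' \<in> grid r \<gamma> \<Longrightarrow> grid_obj r a \<le> grid_obj r a'"
    using assms(2) by (auto simp: is_arg_min_def not_less)
  then have "0 < a" using assms(1) by (auto simp: grid_def)
  have d: "1 \<le> ?d" "1 \<le> sqrt ?d" by (simp_all add: Suc_le_eq)
  show ?thesis
  proof (cases "\<gamma> \<le> infnorm r")
    case False
    have "grid_obj r a \<le> norm r" using \<open>0 < a\<close> by (rule grid_obj_le_norm)
    also have "\<dots> \<le> sqrt ?d * infnorm r" using norm_le_infnorm[of r] by simp
    also have "\<dots> \<le> sqrt ?d * \<gamma>" using False by simp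
    finally show ?thesis by (simp add: add_increasing d(1))
  next
    case True
    obtain a' where a': "a' \<in> grid r \<gamma>" "infnorm r \<le> a'" "a' < infnorm r + \<gamma>"
      using assms(1) True infnorm_le_norm by (rule grid_point_between)
    have "(norm r)\<^sup>2 - (infnorm r)\<^sup>2 \<le> (1 - 1 / ?d) * (norm r)\<^sup>2"
      using power2_norm_le_card_infnorm[of r] d(1) by (simp add: field_simps)
    also have "\<dots> = (sqrt (1 - 1 / ?d) * norm r)\<^sup>2"
      using d(1) by (simp add: power_mult_distrib)
    finally have "(grid_obj r a')\<^sup>2 \<le> (sqrt (1 - 1 / ?d) * norm r)\<^sup>2 + \<gamma>\<^sup>2"
      using power2_grid_obj_le[OF a'(2)] a' \<open>0 < \<gamma>\<close> True power_mono[of "a' - infnorm r" \<gamma> 2]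
      by linarith
    also have "\<dots> \<le> (sqrt (1 - 1 / ?d) * norm r + \<gamma>)\<^sup>2"
      using d(1) assms(1) by (simp add: power2_sum)
    finally have "grid_obj r a' \<le> sqrt (1 - 1 / ?d) * norm r + \<gamma>"
      by (rule power2_le_imp_le) (use d(1) assms(1) in simp)
    moreover have "\<gamma> \<le> sqrt ?d * \<gamma>" using d(2) assms(1) by simp
    ultimately show ?thesis using a_min[OF a'(1)] by linarith
  qed
qed

theorem theorem1:
  fixes w :: "real ^ 'n"
  shows "\<exists>c > 0. \<exists>C. \<forall>(\<eta>::real) (r :: nat \<Rightarrow> real ^ 'n) (a :: nat \<Rightarrow> real)
            (wt :: nat \<Rightarrow> real ^ 'n) (\<gamma> :: nat \<Rightarrow> real).
     \<eta> > 0 \<longrightarrow>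
     r 1 = w \<longrightarrow>
     (\<forall>i \<ge> 1. active r i \<longrightarrow>
        0 < \<gamma> i \<and> ereal (\<gamma> i) \<le> min (min_gap (r i)) (ereal \<eta>) \<and>
        is_arg_min (grid_obj (r i)) (\<lambda>x. x \<in> grid (r i) (\<gamma> i)) (a i) \<and>
        wt i = Qvec ((1 / a i) *\<^sub>R r i) \<and>
        r (Suc i) = r i - a i *\<^sub>R wt i) \<longrightarrow>
     (\<forall>i \<ge> 1. active r i \<longrightarrow>
        qloss (r i) (a i) (wt i) \<le> C * (exp (- c * real i) + \<eta>))"
proof -
  define d where "d = real CARD('n)"
  define c where "c = 1 / (2 * d)"
  define \<rho> where "\<rho> = exp (- c)"
  define C where "C = norm w + sqrt d / (1 - \<rho>)"
  have "0 < c" "0 < \<rho>" "\<rho> < 1" by (simp_all add: c_def d_def \<rho>_def)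
  have contraction: "sqrt (1 - 1 / d) \<le> \<rho>"
    using sqrt_one_minus_inverse_le_exp[of d] by (simp add: d_def c_def \<rho>_def Suc_le_eq)
  show ?thesis
  proof (rule exI[of _ c], intro conjI \<open>0 < c\<close> exI[of _ C] allI impI)
    fix \<eta> r a wt \<gamma> i
    assume "0 < \<eta>" "r 1 = w" and step_spec: "\<forall>i \<ge> 1. active r i \<longrightarrow>
        0 < \<gamma> i \<and> ereal (\<gamma> i) \<le> min (min_gap (r i)) (ereal \<eta>) \<and>
        is_arg_min (grid_obj (r i)) (\<lambda>x. x \<in> grid (r i) (\<gamma> i)) (a i) \<and>
        wt i = Qvec ((1 / a i) *\<^sub>R r i) \<and> r (Suc i) = r i - a i *\<^sub>R wt i"
      and "1 \<le> i" "active r i"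
    have loss: "qloss (r j) (a j) (wt j) = norm (r (Suc j))"
      and step: "norm (r (Suc j)) \<le> \<rho> * norm (r j) + sqrt d * \<eta>"
      if "1 \<le> j" "active r j" for j
    proof -
      have "0 < \<gamma> j" "\<gamma> j \<le> \<eta>" "is_arg_min (grid_obj (r j)) (\<lambda>x. x \<in> grid (r j) (\<gamma> j)) (a j)"
        and r_next: "r (Suc j) = r j - a j *\<^sub>R Qvec ((1 / a j) *\<^sub>R r j)"
        using step_spec that by auto
      show "qloss (r j) (a j) (wt j) = norm (r (Suc j))"
        using step_spec that by (simp add: qloss_def)
      have "norm (r (Suc j)) \<le> sqrt (1 - 1 / d) * norm (r j) + sqrt d * \<gamma> j"
        using grid_search_contracts[OF \<open>0 < \<gamma> j\<close> \<open>is_arg_min _ _ (a j)\<close>]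
        by (simp add: r_next grid_obj_def qloss_def d_def)
      also have "\<dots> \<le> \<rho> * norm (r j) + sqrt d * \<eta>"
        using contraction \<open>\<gamma> j \<le> \<eta>\<close> by (intro add_mono mult_right_mono mult_left_mono) (simp_all add: d_def)
      finally show "norm (r (Suc j)) \<le> \<rho> * norm (r j) + sqrt d * \<eta>" .
    qed
    have "norm (r (Suc i)) \<le> \<rho> ^ i * norm (r (Suc 0)) + sqrt d * \<eta> / (1 - \<rho>)"
    proof (rule linear_recurrence_le[where x = "\<lambda>k. norm (r (Suc k))"])
      fix k assume "k < i"
      with \<open>active r i\<close> have "active r (Suc k)" by (simp add: active_def)
      then show "norm (r (Suc (Suc k))) \<le> \<rho> * norm (r (Suc k)) + sqrt d * \<eta>"
        by (intro step) simp_all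
    qed (use \<open>\<rho> < 1\<close> \<open>0 < \<rho>\<close> \<open>0 < \<eta>\<close> in \<open>simp_all add: d_def\<close>)
    also have "\<rho> ^ i = exp (- c * real i)"
      by (simp add: \<rho>_def flip: exp_of_nat_mult)
    also have "exp (- c * real i) * norm (r (Suc 0)) + sqrt d * \<eta> / (1 - \<rho>)
        \<le> C * (exp (- c * real i) + \<eta>)"
    proof -
      have "0 \<le> sqrt d / (1 - \<rho>) * exp (- c * real i)" "0 \<le> norm w * \<eta>"
        using \<open>\<rho> < 1\<close> \<open>0 < \<eta>\<close> by (simp_all add: d_def)
      then show ?thesis using \<open>r 1 = w\<close> by (simp add: C_def algebra_simps)
    qed
    finally show "qloss (r i) (a i) (wt i) \<le> C * (exp (- c * real i) + \<eta>)"
      using loss \<open>1 \<le> i\<close> \<open>active r i\<close> by simp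
  qed
qed

end
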